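(* Let $\Lambda$ denote the von Mangoldt function and let $\varepsilon>0$ be a small number. Then, as $x\to\infty$, \[ \sum_{n\leq x}\Lambda([x/n])\Lambda([x/n]+2) = r_2 x + O\left(x^{(2+\varepsilon)/3}\log^2 x\right), \] where the density constant is \[ r_2=\sum_{n\geq 1}\frac{\Lambda(n)\Lambda(n+2)}{n(n+1)}\geq 0.368142813. \]
   Context: $[t]$ denotes the largest integer not exceeding $t$. The von Mangoldt function is $\Lambda(m)=\log p$ if $m=p^k$ for a prime $p$ and an integer $k\geq 1$, and $\Lambda(m)=0$ otherwise. The sum is over positive integers $n\le x$. *)

theory Defs
  imports "HOL-Analysis.Analysis" "HOL-Number_Theory.Number_Theory" "HOL-Library.Landau_Symbols"
begin

definition r2_term :: "nat \<Rightarrow> real" where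
  "r2_term m = mangoldt m * mangoldt (m + 2) / (real m * real (m + 1))"

definition r2 :: real where
  "r2 = (\<Sum>n. r2_term (Suc n))"

definition S2 :: "real \<Rightarrow> real" where
  "S2 x = (\<Sum>n\<in>{1..nat \<lfloor>x\<rfloor>}. mangoldt (nat \<lfloor>x / real n\<rfloor>) * mangoldt (nat \<lfloor>x / real n\<rfloor> + 2))"

end

theory Submission
  imports Defs "HOL-Real_Asymp.Real_Asymp"
begin

(* Grouping the n <= x according to m = [x/n] writes S2 x as the sum over m of
   Lambda(m) Lambda(m+2) times #{n. [x/n] = m} = [x/m] - [x/(m+1)] = x/(m(m+1)) + O(1).
   Summing the O(1) errors only up to M = [x^(2/3)] costs O(x^(2/3) log^2 x); the m > M
   together account for at most [x/(M+1)] <= x^(1/3) values of n; and Lambda(m) Lambda(m+2)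
   = O(sqrt m) makes the tail of the series r2 beyond M of size O(M^(-1/2)) = O(x^(-1/3)).
   The numerical lower bound for r2 comes from the five terms m = 2, 3, 5, 7, 9. *)

definition mangoldt_twin :: "nat \<Rightarrow> real" where
  "mangoldt_twin m = mangoldt m * mangoldt (m + 2)"

lemma nat_floor_divide_of_nat:
  assumes "0 \<le> x"
  shows "nat \<lfloor>x / real n\<rfloor> = nat \<lfloor>x\<rfloor> div n"
proof -
  have "\<lfloor>x / real n\<rfloor> = \<lfloor>x\<rfloor> div int n"
    using floor_divide_real_eq_div[of "int n" x] by simp
  then show ?thesis
    using assms by (simp add: nat_div_distrib)
qed

lemma div_eq_iff_in_interval:
  fixes N m n :: nat
  assumes "0 < m"
  shows "0 < n \<and> N div n = m \<longleftrightarrow> n \<in> {N div Suc m<..N div m}"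
proof -
  have div_iff: "k \<le> N div q \<longleftrightarrow> k * q \<le> N" if "0 < q" for k q :: nat
    using that by (rule less_eq_div_iff_mult_less_eq)
  have "N div n = m \<longleftrightarrow> m \<le> N div n \<and> \<not> Suc m \<le> N div n"
    by linarith
  then have "0 < n \<and> N div n = m \<longleftrightarrow> 0 < n \<and> m * n \<le> N \<and> \<not> Suc m * n \<le> N"
    using div_iff[of n] by blast
  also have "\<dots> \<longleftrightarrow> \<not> n * Suc m \<le> N \<and> n * m \<le> N"
    by (cases "n = 0") (simp_all add: mult.commute conj_commute)
  also have "\<dots> \<longleftrightarrow> n \<in> {N div Suc m<..N div m}"
    unfolding greaterThanAtMost_iff not_le [symmetric] div_iff[OF zero_less_Suc] div_iff[OF assms] ..
  finally show ?thesis .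
qed

lemma sum_div_regroup:
  fixes f :: "nat \<Rightarrow> 'a::comm_ring_1"
  shows "(\<Sum>n=1..N. f (N div n)) = (\<Sum>m=1..N. (of_nat (N div m) - of_nat (N div Suc m)) * f m)"
proof -
  have "(\<lambda>n. N div n) ` {1..N} \<subseteq> {1..N}"
    by (auto simp: Suc_le_eq div_greater_zero_iff)
  then have "(\<Sum>n=1..N. f (N div n)) = (\<Sum>m=1..N. \<Sum>n\<in>{n\<in>{1..N}. N div n = m}. f (N div n))"
    by (intro sum.group[symmetric]) auto
  also have "\<dots> = (\<Sum>m=1..N. (of_nat (N div m) - of_nat (N div Suc m)) * f m)"
  proof (rule sum.cong[OF refl])
    fix m
    assume m: "m \<in> {1..N}"
    then have "0 < m"
      by simp
    have "n \<in> {n\<in>{1..N}. N div n = m} \<longleftrightarrow> 0 < n \<and> N div n = m" for n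
      using m div_greater_zero_iff[of N n] by auto
    then have fiber: "{n\<in>{1..N}. N div n = m} = {N div Suc m<..N div m}"
      using \<open>0 < m\<close> by (simp add: set_eq_iff div_eq_iff_in_interval)
    have "(\<Sum>n\<in>{n\<in>{1..N}. N div n = m}. f (N div n)) = (\<Sum>n\<in>{N div Suc m<..N div m}. f m)"
      unfolding fiber[symmetric] by (rule sum.cong) auto
    also have "\<dots> = (of_nat (N div m) - of_nat (N div Suc m)) * f m"
      using m div_le_mono2[of m "Suc m" N] by simp
    finally show "(\<Sum>n\<in>{n\<in>{1..N}. N div n = m}. f (N div n)) =
        (of_nat (N div m) - of_nat (N div Suc m)) * f m" .
  qed
  finally show ?thesis .
qed

lemma mangoldt_twin_nonneg: "0 \<le> mangoldt_twin m"
  unfolding mangoldt_twin_def by (simp add: mangoldt_nonneg)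

lemma mangoldt_twin_le: "mangoldt_twin m \<le> ln (real m + 2) ^ 2"
proof -
  have le: "mangoldt m \<le> ln (real m + 2)"
  proof (cases "m = 0")
    case False
    then have "mangoldt m \<le> ln (real m)"
      by (intro mangoldt_le) auto
    also have "\<dots> \<le> ln (real m + 2)"
      using False by simp
    finally show ?thesis .
  qed simp
  have le2: "mangoldt (m + 2) \<le> ln (real m + 2)"
    using mangoldt_le[of "m + 2"] by (simp add: add.commute)
  show ?thesis
    unfolding mangoldt_twin_def power2_eq_square
    by (rule mult_mono[OF le le2]) (simp_all add: mangoldt_nonneg)
qed

lemma r2_term_eq: "r2_term m = mangoldt_twin m / (real m * (real m + 1))"
  unfolding r2_term_def mangoldt_twin_def by simp

lemma r2_term_nonneg: "0 \<le> r2_term m"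
  by (simp add: r2_term_eq mangoldt_twin_nonneg)

lemma ln_le_4_sqrt_sqrt:
  assumes "0 < z"
  shows "ln z \<le> 4 * sqrt (sqrt z)"
proof -
  have "ln (sqrt (sqrt z)) \<le> sqrt (sqrt z) - 1"
    using assms by (intro ln_le_minus_one) auto
  moreover have "ln (sqrt (sqrt z)) = ln z / 4"
    using assms by (simp add: ln_sqrt)
  ultimately show ?thesis by simp
qed

lemma sqrt_div_le_inverse_sqrt_diff:
  fixes t :: real
  assumes "0 < t"
  shows "sqrt t / (t * (t + 1)) \<le> 2 * (1 / sqrt t - 1 / sqrt (t + 1))"
proof -
  define s u where "s = sqrt t" and "u = sqrt (t + 1)"
  have pos: "0 < s" "s < u"
    using assms by (simp_all add: s_def u_def)
  have "(u - s) * (u + s) = 1"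
    using assms by (simp add: s_def u_def algebra_simps flip: power2_eq_square)
  moreover have "(u - s) * (u + s) \<le> (u - s) * (2 * u)"
    using pos by (intro mult_left_mono) auto
  ultimately have key: "1 \<le> 2 * u * (u - s)"
    by (simp add: algebra_simps)
  have "sqrt t / (t * (t + 1)) = s / (s^2 * u^2)"
    using assms by (simp add: s_def u_def)
  also have "\<dots> = 1 / (s * u^2)"
    using pos by (simp add: field_simps power2_eq_square)
  also have "\<dots> \<le> 2 * u * (u - s) / (s * u^2)"
    using key pos by (intro divide_right_mono) auto
  also have "\<dots> = 2 * (1 / s - 1 / u)"
    using pos by (simp add: field_simps power2_eq_square)
  finally show ?thesis
    by (simp only: s_def u_def)
qed

lemma r2_term_le_telescoping:
  assumes "0 < m"
  shows "r2_term m \<le> 64 * (1 / sqrt m - 1 / sqrt (real m + 1))"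
proof -
  have "ln (real m + 2) \<le> 4 * sqrt (sqrt (real m + 2))"
    by (rule ln_le_4_sqrt_sqrt) simp
  then have "ln (real m + 2) ^ 2 \<le> (4 * sqrt (sqrt (real m + 2))) ^ 2"
    by (rule power_mono) simp
  also have "\<dots> = 16 * sqrt (real m + 2)"
    by (simp add: power_mult_distrib)
  also have "\<dots> \<le> 16 * sqrt (4 * real m)"
    using assms by (intro mult_left_mono real_sqrt_le_mono) auto
  also have "\<dots> = 32 * sqrt m"
    by (simp add: real_sqrt_mult)
  finally have twin: "mangoldt_twin m \<le> 32 * sqrt m"
    using mangoldt_twin_le[of m] by linarith
  have "r2_term m \<le> 32 * sqrt m / (real m * (real m + 1))"
    unfolding r2_term_eq by (intro divide_right_mono twin) auto
  also have "\<dots> \<le> 64 * (1 / sqrt m - 1 / sqrt (real m + 1))"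
    using mult_left_mono[OF sqrt_div_le_inverse_sqrt_diff[of "real m"], of 32] assms by simp
  finally show ?thesis .
qed

lemma summable_telescoping_majorant:
  fixes f g :: "nat \<Rightarrow> real"
  assumes "\<And>n. 0 \<le> f n" and "\<And>n. f n \<le> g n - g (Suc n)" and "g \<longlonglongrightarrow> 0"
  shows "summable f" and "suminf f \<le> g 0"
proof -
  have tele: "(\<lambda>n. g n - g (Suc n)) sums g 0"
    using telescope_sums'[OF assms(3)] by simp
  then have summable_g: "summable (\<lambda>n. g n - g (Suc n))"
    by (rule sums_summable)
  show "summable f"
    by (rule summable_comparison_test'[OF summable_g, of 0]) (simp add: assms)
  then have "suminf f \<le> (\<Sum>n. g n - g (Suc n))"
    using summable_g assms(2) by (intro suminf_le)
  also have "\<dots> = g 0"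
    using tele by (simp add: sums_iff)
  finally show "suminf f \<le> g 0" .
qed

lemma r2_tail:
  shows "summable (\<lambda>n. r2_term (Suc (n + M)))"
    and "(\<Sum>n. r2_term (Suc (n + M))) \<le> 64 / sqrt (real M + 1)"
proof -
  define g where "g n = 64 / sqrt (real (n + M) + 1)" for n
  have "r2_term (Suc (n + M)) \<le> g n - g (Suc n)" for n
    using r2_term_le_telescoping[of "Suc (n + M)"] by (simp add: g_def algebra_simps)
  moreover have "g \<longlonglongrightarrow> 0"
    unfolding g_def by real_asymp
  ultimately show "summable (\<lambda>n. r2_term (Suc (n + M)))"
    and "(\<Sum>n. r2_term (Suc (n + M))) \<le> 64 / sqrt (real M + 1)"
    using summable_telescoping_majorant[of "\<lambda>n. r2_term (Suc (n + M))" g] r2_term_nonneg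
    by (auto simp: g_def)
qed

lemma r2_summable: "summable (\<lambda>n. r2_term (Suc n))"
  using r2_tail(1)[of 0] by simp

lemma r2_tail_bounds:
  shows "0 \<le> r2 - (\<Sum>m=1..M. r2_term m)"
    and "r2 - (\<Sum>m=1..M. r2_term m) \<le> 64 / sqrt (real M + 1)"
proof -
  have "(\<Sum>m=1..M. r2_term m) = (\<Sum>n<M. r2_term (Suc n))"
    by (simp add: sum.atLeast1_atMost_eq)
  then have "r2 - (\<Sum>m=1..M. r2_term m) = (\<Sum>n. r2_term (Suc (n + M)))"
    unfolding r2_def using suminf_split_initial_segment[OF r2_summable, of M] by simp
  then show "0 \<le> r2 - (\<Sum>m=1..M. r2_term m)"
    and "r2 - (\<Sum>m=1..M. r2_term m) \<le> 64 / sqrt (real M + 1)"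
    using r2_tail[of M] by (auto intro!: suminf_nonneg r2_term_nonneg)
qed

lemma ln_add_one_minus_ratio_le:
  fixes a b :: real
  assumes "0 < a" and "a \<le> b"
  shows "ln a + (1 - a / b) \<le> ln b"
proof -
  have "ln (a / b) \<le> a / b - 1"
    using assms by (intro ln_le_minus_one) auto
  moreover have "ln (a / b) = ln a - ln b"
    using assms by (simp add: ln_div)
  ultimately show ?thesis by simp
qed

lemma ln_small_primes_lower_bounds:
  shows "2/3 \<le> ln (2::real)" and "109/100 \<le> ln (3::real)" and "153/100 \<le> ln (5::real)"
    and "189/100 \<le> ln (7::real)" and "236/100 \<le> ln (11::real)"
proof -
  show l2: "2/3 \<le> ln (2::real)"
    by (rule ln2_ge_two_thirds)
  have "ln (272/100) + (1 - (272/100) / 3) \<le> ln (3::real)"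
    by (rule ln_add_one_minus_ratio_le) auto
  then show l3: "109/100 \<le> ln (3::real)"
    using ln_272_gt_1 by simp
  have "ln 4 + (1 - 4/5) \<le> ln (5::real)"
    by (rule ln_add_one_minus_ratio_le) auto
  moreover have "ln (4::real) = 2 * ln 2"
    using ln_realpow[of 2 2] by simp
  ultimately show "153/100 \<le> ln (5::real)"
    using l2 by linarith
  have "ln 6 + (1 - 6/7) \<le> ln (7::real)"
    by (rule ln_add_one_minus_ratio_le) auto
  moreover have "ln (6::real) = ln 2 + ln 3"
    using ln_mult[of 2 3] by simp
  ultimately show "189/100 \<le> ln (7::real)"
    using l2 l3 by linarith
  have "ln 9 + (1 - 9/11) \<le> ln (11::real)"
    by (rule ln_add_one_minus_ratio_le) auto
  moreover have "ln (9::real) = 2 * ln 3"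
    using ln_realpow[of 3 2] by simp
  ultimately show "236/100 \<le> ln (11::real)"
    using l3 by linarith
qed

lemma r2_lower_bound: "0.368142813 \<le> r2"
proof -
  have primes: "prime (3::nat)" "prime (5::nat)" "prime (7::nat)" "prime (11::nat)"
    by simp_all
  have "mangoldt 4 = (ln 2 :: real)" "mangoldt 9 = (ln 3 :: real)"
    using mangoldt_primepow'[of 2 2, where 'a = real] mangoldt_primepow'[of 3 2, where 'a = real]
    by simp_all
  then have terms: "r2_term 2 = ln 2 * ln 2 / 6" "r2_term 3 = ln 3 * ln 5 / 12"
      "r2_term 5 = ln 5 * ln 7 / 30" "r2_term 7 = ln 7 * ln 3 / 56" "r2_term 9 = ln 3 * ln 11 / 90"
    by (simp_all add: r2_term_def primes)
  have "(\<Sum>n\<in>{1, 2, 4, 6, 8}. r2_term (Suc n)) \<le> r2"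
    unfolding r2_def by (rule sum_le_suminf[OF r2_summable]) (auto intro: r2_term_nonneg)
  then have "r2_term 2 + r2_term 3 + r2_term 5 + r2_term 7 + r2_term 9 \<le> r2"
    by (simp add: eval_nat_numeral)
  moreover have "2/3 * (2/3) \<le> ln 2 * ln (2::real)"
    by (rule mult_mono) (use ln_small_primes_lower_bounds in simp_all)
  moreover have "109/100 * (153/100) \<le> ln 3 * ln (5::real)"
    by (rule mult_mono) (use ln_small_primes_lower_bounds in simp_all)
  moreover have "153/100 * (189/100) \<le> ln 5 * ln (7::real)"
    by (rule mult_mono) (use ln_small_primes_lower_bounds in simp_all)
  moreover have "189/100 * (109/100) \<le> ln 7 * ln (3::real)"
    by (rule mult_mono) (use ln_small_primes_lower_bounds in simp_all)
  moreover have "109/100 * (236/100) \<le> ln 3 * ln (11::real)"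
    by (rule mult_mono) (use ln_small_primes_lower_bounds in simp_all)
  ultimately have "37/100 \<le> r2"
    unfolding terms by linarith
  then show ?thesis
    by simp
qed

definition floor_div_count :: "real \<Rightarrow> nat \<Rightarrow> real" where
  "floor_div_count x m = real (nat \<lfloor>x\<rfloor> div m) - real (nat \<lfloor>x\<rfloor> div Suc m)"

lemma S2_eq_sum_floor_div_count:
  assumes "0 \<le> x"
  shows "S2 x = (\<Sum>m=1..nat \<lfloor>x\<rfloor>. floor_div_count x m * mangoldt_twin m)"
  using sum_div_regroup[of "\<lambda>k. mangoldt k * mangoldt (k + 2)" "nat \<lfloor>x\<rfloor>"]
  unfolding S2_def floor_div_count_def mangoldt_twin_def nat_floor_divide_of_nat[OF assms]
  by simp

lemma nat_floor_div_bounds: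
  assumes "0 \<le> x" and "0 < m"
  shows "x / real m - 1 < real (nat \<lfloor>x\<rfloor> div m)" and "real (nat \<lfloor>x\<rfloor> div m) \<le> x / real m"
proof -
  have "real (nat \<lfloor>x\<rfloor> div m) = of_int \<lfloor>x / real m\<rfloor>"
    using assms by (simp flip: nat_floor_divide_of_nat)
  then show "x / real m - 1 < real (nat \<lfloor>x\<rfloor> div m)" and "real (nat \<lfloor>x\<rfloor> div m) \<le> x / real m"
    using real_of_int_floor_gt_diff_one[of "x / real m"] of_int_floor_le[of "x / real m"] by simp_all
qed

lemma floor_div_count_nonneg:
  assumes "0 < m"
  shows "0 \<le> floor_div_count x m"
  unfolding floor_div_count_def using assms div_le_mono2[of m "Suc m"] by simp

lemma floor_div_count_approx:
  assumes "0 \<le> x" and "0 < m"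
  shows "\<bar>floor_div_count x m - x / (real m * (real m + 1))\<bar> \<le> 1"
proof -
  have "x / (real m * (real m + 1)) = x / real m - x / real (Suc m)"
    using assms by (simp add: field_simps)
  then show ?thesis
    unfolding floor_div_count_def abs_le_iff
    using nat_floor_div_bounds[OF assms] nat_floor_div_bounds[of x "Suc m"] assms(1) by linarith
qed

lemma sum_floor_div_count_tail:
  assumes "0 \<le> x" and "M \<le> nat \<lfloor>x\<rfloor>"
  shows "(\<Sum>m=Suc M..nat \<lfloor>x\<rfloor>. floor_div_count x m) \<le> x / (real M + 1)"
proof -
  define N where "N = nat \<lfloor>x\<rfloor>"
  have "(\<Sum>m=Suc M..N. floor_div_count x m) = real (N div Suc M) - real (N div Suc N)"
    unfolding floor_div_count_def N_def[symmetric]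
    using sum_Suc_diff[of "Suc M" N "\<lambda>i. - real (N div i)"] assms(2) by (simp add: N_def)
  also have "\<dots> = real (N div Suc M)"
    by simp
  also have "\<dots> \<le> x / (real M + 1)"
    using nat_floor_div_bounds(2)[of x "Suc M"] assms(1) by (simp add: N_def add.commute)
  finally show ?thesis
    unfolding N_def .
qed

lemma mangoldt_twin_le_ln_sq:
  assumes "0 \<le> x" and "m \<le> nat \<lfloor>x\<rfloor>"
  shows "mangoldt_twin m \<le> ln (x + 2) ^ 2"
proof -
  have "real m \<le> x"
    using assms le_nat_iff[of "\<lfloor>x\<rfloor>" m] le_floor_iff[of "int m" x] by simp
  then have "ln (real m + 2) ^ 2 \<le> ln (x + 2) ^ 2"
    by (intro power_mono) auto
  then show ?thesis
    using mangoldt_twin_le[of m] by linarith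
qed

lemma S2_error_le_split:
  assumes "0 \<le> x" and "M \<le> nat \<lfloor>x\<rfloor>"
  shows "\<bar>S2 x - r2 * x\<bar> \<le>
    (real M + x / (real M + 1)) * ln (x + 2) ^ 2 + 64 * x / sqrt (real M + 1)"
proof -
  define N where "N = nat \<lfloor>x\<rfloor>"
  define L where "L = ln (x + 2) ^ 2"
  define c where "c m = floor_div_count x m * mangoldt_twin m" for m
  define R where "R = (\<Sum>m=1..M. r2_term m)"
  have twin_le: "mangoldt_twin m \<le> L" if "m \<le> N" for m
    using mangoldt_twin_le_ln_sq[OF assms(1)] that unfolding N_def L_def .
  have S2_split: "S2 x = (\<Sum>m=1..M. c m) + (\<Sum>m=Suc M..N. c m)"
    using S2_eq_sum_floor_div_count[OF assms(1)] sum.ub_add_nat[of 1 M c "N - M"] assms(2)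
    by (simp add: N_def c_def)
  have short: "\<bar>(\<Sum>m=1..M. c m) - x * R\<bar> \<le> real M * L"
  proof -
    have "\<bar>(\<Sum>m=1..M. c m) - x * R\<bar> = \<bar>\<Sum>m=1..M. c m - x * r2_term m\<bar>"
      by (simp add: R_def sum_subtractf sum_distrib_left)
    also have "\<dots> \<le> (\<Sum>m=1..M. \<bar>c m - x * r2_term m\<bar>)"
      by (rule sum_abs)
    also have "\<dots> \<le> (\<Sum>m=1..M. L)"
    proof (rule sum_mono)
      fix m
      assume m: "m \<in> {1..M}"
      have "c m - x * r2_term m = (floor_div_count x m - x / (real m * (real m + 1))) * mangoldt_twin m"
        by (simp add: c_def r2_term_eq algebra_simps)
      then have "\<bar>c m - x * r2_term m\<bar> = \<bar>floor_div_count x m - x / (real m * (real m + 1))\<bar> * mangoldt_twin m"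
        by (simp add: abs_mult mangoldt_twin_nonneg)
      also have "\<dots> \<le> 1 * mangoldt_twin m"
        using m by (intro mult_right_mono floor_div_count_approx[OF assms(1)] mangoldt_twin_nonneg) auto
      also have "\<dots> \<le> L"
        using twin_le[of m] m assms(2) by (simp add: N_def)
      finally show "\<bar>c m - x * r2_term m\<bar> \<le> L" .
    qed
    finally show ?thesis by simp
  qed
  have long_nonneg: "0 \<le> (\<Sum>m=Suc M..N. c m)"
    unfolding c_def by (intro sum_nonneg mult_nonneg_nonneg floor_div_count_nonneg mangoldt_twin_nonneg) auto
  have "(\<Sum>m=Suc M..N. c m) \<le> (\<Sum>m=Suc M..N. floor_div_count x m * L)"
    unfolding c_def by (intro sum_mono mult_left_mono twin_le floor_div_count_nonneg) auto
  also have "\<dots> = (\<Sum>m=Suc M..N. floor_div_count x m) * L"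
    by (simp add: sum_distrib_right)
  also have "\<dots> \<le> x / (real M + 1) * L"
    using sum_floor_div_count_tail[OF assms] unfolding N_def L_def by (rule mult_right_mono) simp
  finally have long: "(\<Sum>m=Suc M..N. c m) \<le> x / (real M + 1) * L" .
  have tail_nonneg: "0 \<le> x * (r2 - R)"
    using r2_tail_bounds(1)[of M] assms(1) unfolding R_def by simp
  have "x * (r2 - R) \<le> x * (64 / sqrt (real M + 1))"
    using r2_tail_bounds(2)[of M] assms(1) unfolding R_def by (rule mult_left_mono)
  then have tail: "x * (r2 - R) \<le> 64 * x / sqrt (real M + 1)"
    by (simp add: mult.commute)
  have "S2 x - r2 * x = ((\<Sum>m=1..M. c m) - x * R) + (\<Sum>m=Suc M..N. c m) - x * (r2 - R)"
    by (simp add: S2_split algebra_simps)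
  moreover have "(real M + x / (real M + 1)) * L = real M * L + x / (real M + 1) * L"
    by (simp add: distrib_right)
  ultimately show ?thesis
    using short long_nonneg long tail_nonneg tail unfolding L_def abs_le_iff by linarith
qed

lemma S2_error_le:
  assumes "1 \<le> x"
  shows "\<bar>S2 x - r2 * x\<bar> \<le> (2 * ln (x + 2) ^ 2 + 64) * x powr (2/3)"
proof -
  define M where "M = nat \<lfloor>x powr (2/3)\<rfloor>"
  have "x powr (2/3) \<le> x"
    using assms powr_mono[of "2/3" 1 x] by simp
  then have M_le_x: "M \<le> nat \<lfloor>x\<rfloor>"
    unfolding M_def by (intro nat_mono floor_mono)
  have M_le: "real M \<le> x powr (2/3)" and M_gt: "x powr (2/3) < real M + 1"
    unfolding M_def using of_int_floor_le[of "x powr (2/3)"] real_of_int_floor_add_one_gt[of "x powr (2/3)"]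
    by simp_all
  have x_div: "x / x powr (2/3) = x powr (1/3)"
    using assms powr_diff[of x 1 "2/3"] by simp
  have "x / (real M + 1) \<le> x / x powr (2/3)"
    using assms M_gt by (intro divide_left_mono) auto
  also have "\<dots> \<le> x powr (2/3)"
    unfolding x_div using assms by (intro powr_mono) auto
  finally have long: "x / (real M + 1) \<le> x powr (2/3)" .
  have "x powr (1/3) \<le> sqrt (real M + 1)"
    using powr_half_sqrt_powr[of x "2/3"] assms M_gt by simp
  then have "64 * x / sqrt (real M + 1) \<le> 64 * x / x powr (1/3)"
    using assms by (intro divide_left_mono) auto
  also have "\<dots> = 64 * x powr (2/3)"
    using assms powr_diff[of x 1 "1/3"] by simp
  finally have tail: "64 * x / sqrt (real M + 1) \<le> 64 * x powr (2/3)" .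
  have "(real M + x / (real M + 1)) * ln (x + 2) ^ 2 \<le> (2 * x powr (2/3)) * ln (x + 2) ^ 2"
    using M_le long by (intro mult_right_mono) auto
  then show ?thesis
    using S2_error_le_split[OF _ M_le_x] assms tail by (simp add: algebra_simps)
qed

theorem theorem10p2:
  fixes \<epsilon> :: real
  assumes "\<epsilon> > 0"
  shows "summable (\<lambda>n. r2_term (Suc n)) \<and> r2 \<ge> 0.368142813 \<and>
         (\<lambda>x. S2 x - r2 * x) \<in> O[at_top](\<lambda>x. x powr ((2 + \<epsilon>) / 3) * (ln x) ^ 2)"
proof (intro conjI)
  show "summable (\<lambda>n. r2_term (Suc n))"
    by (rule r2_summable)
  show "r2 \<ge> 0.368142813"
    by (rule r2_lower_bound)
  have "(\<lambda>x. S2 x - r2 * x) \<in> O[at_top](\<lambda>x. (2 * ln (x + 2) ^ 2 + 64) * x powr (2/3))"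
  proof (rule landau_o.big_mono)
    show "\<forall>\<^sub>F x in at_top. norm (S2 x - r2 * x) \<le> norm ((2 * ln (x + 2) ^ 2 + 64) * x powr (2/3))"
      using eventually_ge_at_top[of "1::real"]
    proof eventually_elim
      case (elim x)
      have "\<bar>S2 x - r2 * x\<bar> \<le> (2 * ln (x + 2) ^ 2 + 64) * x powr (2/3)"
        by (rule S2_error_le[OF elim])
      also have "\<dots> \<le> \<bar>(2 * ln (x + 2) ^ 2 + 64) * x powr (2/3)\<bar>"
        by (rule abs_ge_self)
      finally show ?case by simp
    qed
  qed
  also have "(\<lambda>x. (2 * ln (x + 2) ^ 2 + 64) * x powr (2/3)) \<in> O[at_top](\<lambda>x. x powr ((2 + \<epsilon>) / 3) * (ln x) ^ 2)"
    using assms by real_asymp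
  finally show "(\<lambda>x. S2 x - r2 * x) \<in> O[at_top](\<lambda>x. x powr ((2 + \<epsilon>) / 3) * (ln x) ^ 2)" .
qed

end
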